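(* Let $f:\Delta_{\mathcal Y}\to\mathbb R$ be permutation-invariant and convex ($\mathcal Y=\{1,\dots,n\}$), and let $F:\mathrm{Dens}(\mathcal X)\to\mathbb R$ be $F(\rho)=f(\lambda(\rho))$. Then for every $\lambda\in\Delta_{\mathcal Y}$, every unitary $U$ on $\mathcal X=\mathbb C^n$, and every $d\in(\mathbb R\cup\{-\infty\})^n$: $d\in\overline\partial f(\lambda)$ if and only if $U\,\mathrm{Diag}(d)\,U^*\in\overline\partial F(U\,\mathrm{Diag}(\lambda)\,U^* )$.
   Context: $\lambda(A)$ is the vector of eigenvalues of a Hermitian $A$ in decreasing order; $\mathrm{Dens}(\mathcal X)$ the $n\times n$ density matrices, $\langle X,Y\rangle=\mathrm{Tr}(X^*Y)$. $f$ is permutation-invariant if $f(\pi p)=f(p)$ for all permutations $\pi$, $(\pi p)_y=p_{\pi_y}$. For $d\in(\mathbb R\cup\{-\infty\})^n$ and $x\in\mathbb R^n$, $\langle d,x\rangle=\sum_{y:d_y\in\mathbb R}d_yx_y-\infty\sum_{y:d_y=-\infty}x_y$ (with $-\infty\cdot0=0$). For unitary $U$ with columns $u_1,\dots,u_n$, $U\mathrm{Diag}(d)U^*$ denotes the extended Hermitian matrix $A-\infty B$ with $A=\sum_{d_y\in\mathbb R}d_yu_yu_y^*$, $B=\sum_{d_y=-\infty}u_yu_y^*$, acting by $\langle A-\infty B,X\rangle=\langle A,X\rangle-\infty\langle B,X\rangle$. For convex $G:C\to\mathbb R$, $\overline\partial G(x)$ is the set of such extended linear functionals $d$ with $G(x')\ge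 G(x)+\langle d,x'-x\rangle$ for all $x'\in C$ (here $C=\Delta_{\mathcal Y}$, resp. $C=\mathrm{Dens}(\mathcal X)$). *)

theory Defs
  imports "Jordan_Normal_Form.Char_Poly" "Jordan_Normal_Form.Schur_Decomposition"
    "HOL-Library.Extended_Real"
begin

text \<open>Vectors in R^n / C^n and n x n matrices are Jordan_Normal_Form vec/mat with
  explicit dimension n (indices 0..n-1 play the role of Y = {1..n}).\<close>

definition mtrace :: "complex mat \<Rightarrow> complex" where
  "mtrace A = (\<Sum>i<dim_row A. A $$ (i, i))"

definition hermitian :: "nat \<Rightarrow> complex mat \<Rightarrow> bool" where
  "hermitian n A \<longleftrightarrow> A \<in> carrier_mat n n \<and> mat_adjoint A = A"

definition unitary :: "nat \<Rightarrow> complex mat \<Rightarrow> bool" where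
  "unitary n U \<longleftrightarrow> U \<in> carrier_mat n n \<and> U * mat_adjoint U = 1\<^sub>m n \<and> mat_adjoint U * U = 1\<^sub>m n"

definition simplex :: "nat \<Rightarrow> real vec set" where
  "simplex n = {p \<in> carrier_vec n. (\<forall>i<n. 0 \<le> p $ i) \<and> (\<Sum>i<n. p $ i) = 1}"

definition Dens :: "nat \<Rightarrow> complex mat set" where
  "Dens n = {\<rho>. hermitian n \<rho> \<and>
     (\<forall>v \<in> carrier_vec n. Im (conjugate v \<bullet> (\<rho> *\<^sub>v v)) = 0 \<and> 0 \<le> Re (conjugate v \<bullet> (\<rho> *\<^sub>v v)))
     \<and> mtrace \<rho> = 1}"

definition eigvals :: "complex mat \<Rightarrow> real vec" where
  "eigvals A = vec_of_list (THE xs. length xs = dim_row A \<and> sorted_wrt (\<ge>) xs \<and>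
      (\<forall>x. count_list xs x = order (complex_of_real x) (char_poly A)))"

definition perm_invariant :: "nat \<Rightarrow> (real vec \<Rightarrow> real) \<Rightarrow> bool" where
  "perm_invariant n f \<longleftrightarrow> (\<forall>\<pi> p. \<pi> permutes {..<n} \<longrightarrow> p \<in> simplex n \<longrightarrow>
      f (vec n (\<lambda>y. p $ (\<pi> y))) = f p)"

definition convex_on_simplex :: "nat \<Rightarrow> (real vec \<Rightarrow> real) \<Rightarrow> bool" where
  "convex_on_simplex n f \<longleftrightarrow> (\<forall>p \<in> simplex n. \<forall>q \<in> simplex n. \<forall>t::real. 0 \<le> t \<longrightarrow> t \<le> 1 \<longrightarrow>
      f (t \<cdot>\<^sub>v p + (1 - t) \<cdot>\<^sub>v q) \<le> t * f p + (1 - t) * f q)"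

definition ext_vec :: "nat \<Rightarrow> ereal vec \<Rightarrow> bool" where
  "ext_vec n d \<longleftrightarrow> d \<in> carrier_vec n \<and> (\<forall>i<n. d $ i \<noteq> \<infinity>)"

text \<open>Pairing <d,x> = sum_{d_y real} d_y x_y - oo * sum_{d_y = -oo} x_y  (with -oo*0 = 0).\<close>
definition vpair :: "nat \<Rightarrow> ereal vec \<Rightarrow> real vec \<Rightarrow> ereal" where
  "vpair n d x = ereal (\<Sum>y\<in>{y. y < n \<and> d $ y \<noteq> -\<infinity>}. real_of_ereal (d $ y) * x $ y)
      + (-\<infinity>) * ereal (\<Sum>y\<in>{y. y < n \<and> d $ y = -\<infinity>}. x $ y)"

definition subdiff_vec :: "nat \<Rightarrow> (real vec \<Rightarrow> real) \<Rightarrow> real vec \<Rightarrow> ereal vec set" where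
  "subdiff_vec n G x = {d. ext_vec n d \<and>
      (\<forall>x' \<in> simplex n. ereal (G x') \<ge> ereal (G x) + vpair n d (x' - x))}"

text \<open>Extended Hermitian matrices A - oo B are represented by the pair (A, B).\<close>
definition mpair :: "complex mat \<times> complex mat \<Rightarrow> complex mat \<Rightarrow> ereal" where
  "mpair AB X = ereal (Re (mtrace (mat_adjoint (fst AB) * X)))
      + (-\<infinity>) * ereal (Re (mtrace (mat_adjoint (snd AB) * X)))"

definition subdiff_mat :: "nat \<Rightarrow> (complex mat \<Rightarrow> real) \<Rightarrow> complex mat \<Rightarrow> (complex mat \<times> complex mat) set" where
  "subdiff_mat n G \<rho> = {(A, B). hermitian n A \<and> hermitian n B \<and>
      (\<forall>\<rho>' \<in> Dens n. ereal (G \<rho>') \<ge> ereal (G \<rho>) + mpair (A, B) (\<rho>' - \<rho>))}"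

text \<open>U Diag(d) U^* = A - oo B with A = sum_{d_y real} d_y u_y u_y^*, B = sum_{d_y=-oo} u_y u_y^*.\<close>
definition ext_UDU :: "nat \<Rightarrow> complex mat \<Rightarrow> ereal vec \<Rightarrow> complex mat \<times> complex mat" where
  "ext_UDU n U d =
     (U * mat n n (\<lambda>(i, j). if i = j \<and> d $ i \<noteq> -\<infinity> then complex_of_real (real_of_ereal (d $ i)) else 0)
        * mat_adjoint U,
      U * mat n n (\<lambda>(i, j). if i = j \<and> d $ i = -\<infinity> then 1 else 0) * mat_adjoint U)"

definition UDU :: "nat \<Rightarrow> complex mat \<Rightarrow> real vec \<Rightarrow> complex mat" where
  "UDU n U p = U * mat n n (\<lambda>(i, j). if i = j then complex_of_real (p $ i) else 0) * mat_adjoint U"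

end

theory Submission
  imports Defs
begin

text \<open>Every density matrix is \<open>\<rho>' = V Diag(\<mu>) V\<^sup>*\<close> with \<open>\<mu>\<close> in the simplex, and then
  \<open>\<langle>U Diag(d) U\<^sup>*, \<rho>'\<rangle> = \<Sum>\<^sub>i\<^sub>j d\<^sub>i \<mu>\<^sub>j |(U\<^sup>*V)\<^sub>i\<^sub>j|\<^sup>2\<close>, a pairing through the
  doubly stochastic matrix \<open>|(U\<^sup>*V)\<^sub>i\<^sub>j|\<^sup>2\<close>. By the rearrangement inequality such a pairing is
  dominated by \<open>\<Sum>\<^sub>i d\<^sub>i \<mu>\<^sub>\<sigma>\<^sub>i\<close> for some permutation \<open>\<sigma>\<close>, and \<open>F(\<rho>') = f(\<mu>) = f(\<mu> \<circ> \<sigma>)\<close>;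
  so the matrix subgradient inequality at \<open>\<rho>'\<close> follows from the vector one at \<open>\<mu> \<circ> \<sigma>\<close>.
  Entries \<open>d\<^sub>i = -\<infinity>\<close> are handled by a penalty argument that keeps \<open>\<mu> \<circ> \<sigma>\<close> away from them.
  Conversely, the matrix inequality at \<open>\<rho>' = U Diag(x) U\<^sup>*\<close> is the vector inequality at \<open>x\<close>.\<close>

section \<open>Adjoints, traces and unitary conjugates of diagonal matrices\<close>

lemma dim_mat_adjoint [simp]:
  "dim_row (mat_adjoint A) = dim_col A" "dim_col (mat_adjoint A) = dim_row A"
  unfolding mat_adjoint_def by simp_all

lemma index_mat_adjoint [simp]:
  "i < dim_col A \<Longrightarrow> j < dim_row A \<Longrightarrow> mat_adjoint A $$ (i, j) = cnj (A $$ (j, i))"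
  unfolding mat_adjoint_def by (simp add: mat_of_rows_def)

lemma mat_adjoint_carrier [simp]: "A \<in> carrier_mat m n \<Longrightarrow> mat_adjoint A \<in> carrier_mat n m"
  by auto

lemma mat_adjoint_mat_adjoint [simp]: "mat_adjoint (mat_adjoint (A :: complex mat)) = A"
  by (rule eq_matI) auto

lemma mat_adjoint_mult:
  fixes A B :: "complex mat"
  assumes "A \<in> carrier_mat m k" "B \<in> carrier_mat k n"
  shows "mat_adjoint (A * B) = mat_adjoint B * mat_adjoint A"
proof (rule eq_matI)
  fix i j assume "i < dim_row (mat_adjoint B * mat_adjoint A)" "j < dim_col (mat_adjoint B * mat_adjoint A)"
  with assms show "mat_adjoint (A * B) $$ (i, j) = (mat_adjoint B * mat_adjoint A) $$ (i, j)"
    by (simp add: scalar_prod_def mult.commute)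
qed (use assms in auto)

lemma index_mult_mat_lessThan:
  assumes "A \<in> carrier_mat m k" "B \<in> carrier_mat k n" "i < m" "j < n"
  shows "(A * B) $$ (i, j) = (\<Sum>l<k. A $$ (i, l) * B $$ (l, j))"
  using assms by (simp add: scalar_prod_def atLeast0LessThan)

lemma index_mult_mat_vec_lessThan:
  "A \<in> carrier_mat m n \<Longrightarrow> v \<in> carrier_vec n \<Longrightarrow> i < m \<Longrightarrow> (A *\<^sub>v v) $ i = (\<Sum>j<n. A $$ (i, j) * v $ j)"
  by (simp add: scalar_prod_def atLeast0LessThan)

lemma mult_mat_vec_unit_vec:
  fixes A :: "'a :: semiring_1 mat"
  shows "A \<in> carrier_mat m n \<Longrightarrow> j < n \<Longrightarrow> A *\<^sub>v unit_vec n j = col A j"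
  by (rule eq_vecI) (simp_all add: scalar_prod_right_unit)

lemma mtrace_mult_commute:
  fixes A B :: "complex mat"
  assumes "A \<in> carrier_mat m k" "B \<in> carrier_mat k m"
  shows "mtrace (A * B) = mtrace (B * A)"
proof -
  have "mtrace (A * B) = (\<Sum>i<m. \<Sum>l<k. A $$ (i, l) * B $$ (l, i))"
    unfolding mtrace_def using assms by (simp add: index_mult_mat_lessThan del: index_mult_mat(1))
  also have "\<dots> = (\<Sum>l<k. \<Sum>i<m. B $$ (l, i) * A $$ (i, l))"
    by (subst sum.swap) (simp add: mult.commute)
  also have "\<dots> = mtrace (B * A)"
    unfolding mtrace_def using assms by (simp add: index_mult_mat_lessThan del: index_mult_mat(1))
  finally show ?thesis .
qed

lemma mtrace_minus:
  "A \<in> carrier_mat n n \<Longrightarrow> B \<in> carrier_mat n n \<Longrightarrow> mtrace (A - B) = mtrace A - mtrace B"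
  unfolding mtrace_def by (simp add: sum_subtractf)

definition real_diag :: "nat \<Rightarrow> (nat \<Rightarrow> real) \<Rightarrow> complex mat" where
  "real_diag n a = mat n n (\<lambda>(i, j). if i = j then complex_of_real (a i) else 0)"

lemma real_diag_carrier [simp]: "real_diag n a \<in> carrier_mat n n"
  and dim_real_diag [simp]: "dim_row (real_diag n a) = n" "dim_col (real_diag n a) = n"
  by (simp_all add: real_diag_def)

lemma index_real_diag [simp]:
  "i < n \<Longrightarrow> j < n \<Longrightarrow> real_diag n a $$ (i, j) = (if i = j then complex_of_real (a i) else 0)"
  by (simp add: real_diag_def)

lemma mat_adjoint_real_diag [simp]: "mat_adjoint (real_diag n a) = real_diag n a"
  by (rule eq_matI) auto

lemma index_mult_real_diag:
  assumes "A \<in> carrier_mat m n" "i < m" "j < n"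
  shows "(A * real_diag n a) $$ (i, j) = A $$ (i, j) * complex_of_real (a j)"
proof -
  have "(A * real_diag n a) $$ (i, j) = (\<Sum>l<n. A $$ (i, l) * real_diag n a $$ (l, j))"
    using assms by (intro index_mult_mat_lessThan) auto
  also have "\<dots> = (\<Sum>l<n. if l = j then A $$ (i, j) * complex_of_real (a j) else 0)"
    using assms by (intro sum.cong) auto
  finally show ?thesis using assms by simp
qed

lemma index_real_diag_mult:
  assumes "A \<in> carrier_mat n m" "i < n" "j < m"
  shows "(real_diag n a * A) $$ (i, j) = complex_of_real (a i) * A $$ (i, j)"
proof -
  have "(real_diag n a * A) $$ (i, j) = (\<Sum>l<n. real_diag n a $$ (i, l) * A $$ (l, j))"
    using assms by (intro index_mult_mat_lessThan) auto
  also have "\<dots> = (\<Sum>l<n. if l = i then complex_of_real (a i) * A $$ (i, j) else 0)"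
    using assms by (intro sum.cong) auto
  finally show ?thesis using assms by simp
qed

lemma unitaryD:
  assumes "unitary n U"
  shows "U \<in> carrier_mat n n" "U * mat_adjoint U = 1\<^sub>m n" "mat_adjoint U * U = 1\<^sub>m n"
  using assms unfolding unitary_def by auto

lemma unitary_one: "unitary n (1\<^sub>m n)"
proof -
  have "mat_adjoint (1\<^sub>m n) = (1\<^sub>m n :: complex mat)" by (rule eq_matI) auto
  thus ?thesis unfolding unitary_def by simp
qed

lemma unitary_adjoint: "unitary n U \<Longrightarrow> unitary n (mat_adjoint U)"
  unfolding unitary_def by auto

lemma unitary_mult:
  assumes "unitary n U" "unitary n V"
  shows "unitary n (U * V)"
proof -
  note U = unitaryD[OF assms(1)] and V = unitaryD[OF assms(2)]
  have adj: "mat_adjoint (U * V) = mat_adjoint V * mat_adjoint U"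
    using U V by (simp add: mat_adjoint_mult)
  have "U * V * mat_adjoint (U * V) = U * (V * mat_adjoint V) * mat_adjoint U"
    unfolding adj using U(1) V(1) by (simp add: assoc_mult_mat[of _ n n _ n _ n] mult_carrier_mat[of _ n n _ n])
  moreover have "mat_adjoint (U * V) * (U * V) = mat_adjoint V * (mat_adjoint U * U) * V"
    unfolding adj using U(1) V(1) by (simp add: assoc_mult_mat[of _ n n _ n _ n] mult_carrier_mat[of _ n n _ n])
  ultimately show ?thesis
    unfolding unitary_def using U V by simp
qed

definition spectral_mat :: "nat \<Rightarrow> complex mat \<Rightarrow> (nat \<Rightarrow> real) \<Rightarrow> complex mat" where
  "spectral_mat n U a = U * real_diag n a * mat_adjoint U"

lemma spectral_mat_carrier [simp]: "U \<in> carrier_mat n n \<Longrightarrow> spectral_mat n U a \<in> carrier_mat n n"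
  unfolding spectral_mat_def by (simp add: mult_carrier_mat[of _ n n _ n])

lemma UDU_eq_spectral_mat: "UDU n U p = spectral_mat n U (\<lambda>i. p $ i)"
  unfolding UDU_def spectral_mat_def real_diag_def ..

lemma mat_adjoint_spectral_mat:
  assumes "U \<in> carrier_mat n n"
  shows "mat_adjoint (spectral_mat n U a) = spectral_mat n U a"
  unfolding spectral_mat_def using assms
  by (simp add: mat_adjoint_mult[of _ n n _ n] mult_carrier_mat[of _ n n _ n] assoc_mult_mat[of _ n n _ n _ n])

lemma hermitian_spectral_mat: "U \<in> carrier_mat n n \<Longrightarrow> hermitian n (spectral_mat n U a)"
  unfolding hermitian_def using mat_adjoint_spectral_mat by simp

lemma index_spectral_mat:
  assumes "U \<in> carrier_mat n n" "p < n" "q < n"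
  shows "spectral_mat n U a $$ (p, q) = (\<Sum>l<n. U $$ (p, l) * complex_of_real (a l) * cnj (U $$ (q, l)))"
proof -
  have "spectral_mat n U a $$ (p, q) = (\<Sum>l<n. (U * real_diag n a) $$ (p, l) * mat_adjoint U $$ (l, q))"
    unfolding spectral_mat_def using assms by (intro index_mult_mat_lessThan) auto
  also have "\<dots> = (\<Sum>l<n. U $$ (p, l) * complex_of_real (a l) * cnj (U $$ (q, l)))"
    using assms by (intro sum.cong refl) (simp add: index_mult_real_diag del: index_mult_mat(1))
  finally show ?thesis .
qed

lemma mtrace_spectral_mat:
  assumes "unitary n U"
  shows "mtrace (spectral_mat n U a) = complex_of_real (\<Sum>i<n. a i)"
proof -
  note U = unitaryD[OF assms]
  have "mtrace (spectral_mat n U a) = mtrace (U * (real_diag n a * mat_adjoint U))"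
    unfolding spectral_mat_def using U(1) by (simp add: assoc_mult_mat[of _ n n _ n _ n])
  also have "\<dots> = mtrace (real_diag n a * mat_adjoint U * U)"
    using U(1) by (simp add: mtrace_mult_commute[of U n n] mult_carrier_mat[of _ n n _ n])
  also have "real_diag n a * mat_adjoint U * U = real_diag n a"
    using U by (simp add: assoc_mult_mat[of _ n n _ n _ n])
  finally show ?thesis
    unfolding mtrace_def by simp
qed

definition overlap :: "complex mat \<Rightarrow> complex mat \<Rightarrow> nat \<Rightarrow> nat \<Rightarrow> real" where
  "overlap U V i j = (cmod ((mat_adjoint U * V) $$ (i, j)))\<^sup>2"

lemma mtrace_spectral_mat_mult:
  assumes U: "U \<in> carrier_mat n n" and V: "V \<in> carrier_mat n n"
  shows "mtrace (spectral_mat n U a * spectral_mat n V b)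
     = complex_of_real (\<Sum>i<n. \<Sum>j<n. a i * b j * overlap U V i j)"
proof -
  define W where "W = mat_adjoint U * V"
  have W: "W \<in> carrier_mat n n"
    using U V unfolding W_def by (simp add: mult_carrier_mat[of _ n n _ n])
  have "mtrace (spectral_mat n U a * spectral_mat n V b)
      = mtrace (real_diag n a * mat_adjoint U * spectral_mat n V b * U)"
    unfolding spectral_mat_def using U V
    by (simp add: assoc_mult_mat[of _ n n _ n _ n] mult_carrier_mat[of _ n n _ n] mtrace_mult_commute[of U n n])
  also have "real_diag n a * mat_adjoint U * spectral_mat n V b * U = real_diag n a * spectral_mat n W b"
    unfolding spectral_mat_def W_def using U V
    by (simp add: mat_adjoint_mult[of _ n n _ n] assoc_mult_mat[of _ n n _ n _ n] mult_carrier_mat[of _ n n _ n])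
  also have "mtrace (real_diag n a * spectral_mat n W b)
      = (\<Sum>i<n. \<Sum>j<n. complex_of_real (a i) * (W $$ (i, j) * complex_of_real (b j) * cnj (W $$ (i, j))))"
    unfolding mtrace_def using W
    by (simp add: index_real_diag_mult[of _ n n] index_spectral_mat sum_distrib_left del: index_mult_mat(1))
  also have "\<dots> = complex_of_real (\<Sum>i<n. \<Sum>j<n. a i * b j * (cmod (W $$ (i, j)))\<^sup>2)"
    by (simp add: complex_norm_square mult_ac del: of_real_power)
  finally show ?thesis unfolding W_def overlap_def .
qed

lemma Re_mtrace_adjoint_spectral_mat_mult:
  assumes "U \<in> carrier_mat n n" "V \<in> carrier_mat n n"
  shows "Re (mtrace (mat_adjoint (spectral_mat n U a) * spectral_mat n V b))
     = (\<Sum>i<n. \<Sum>j<n. a i * b j * overlap U V i j)"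
  using assms by (simp add: mat_adjoint_spectral_mat mtrace_spectral_mat_mult)

lemma overlap_self:
  assumes "unitary n U" "i < n" "j < n"
  shows "overlap U U i j = of_bool (i = j)"
  using unitaryD[OF assms(1)] assms(2,3) unfolding overlap_def by simp

lemma sum_overlap_self:
  assumes "unitary n U"
  shows "(\<Sum>i<n. \<Sum>j<n. a i * b j * overlap U U i j) = (\<Sum>i<n. a i * b i)"
  using overlap_self[OF assms] by (simp add: of_bool_def if_distrib[of "\<lambda>x. _ * x"] cong: if_cong)

lemma Re_mtrace_spectral_mat_diff:
  assumes U: "unitary n U" and V: "V \<in> carrier_mat n n"
  shows "Re (mtrace (mat_adjoint (spectral_mat n U a) * (spectral_mat n V b - spectral_mat n U c)))
     = (\<Sum>i<n. \<Sum>j<n. a i * b j * overlap U V i j) - (\<Sum>i<n. a i * c i)"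
proof -
  note U_mat = unitaryD(1)[OF U]
  have "mat_adjoint (spectral_mat n U a) * (spectral_mat n V b - spectral_mat n U c)
      = mat_adjoint (spectral_mat n U a) * spectral_mat n V b - mat_adjoint (spectral_mat n U a) * spectral_mat n U c"
    using U_mat V by (intro mult_minus_distrib_mat[of _ n n _ n]) auto
  moreover have "(\<Sum>i<n. \<Sum>j<n. a i * c j * overlap U U i j) = (\<Sum>i<n. a i * c i)"
    by (rule sum_overlap_self[OF U])
  ultimately show ?thesis
    using U_mat V
    by (simp add: mtrace_minus[of _ n] Re_mtrace_adjoint_spectral_mat_mult mult_carrier_mat[of _ n n _ n])
qed

lemma unitary_sum_row_sq:
  assumes "unitary n W" "i < n"
  shows "(\<Sum>j<n. (cmod (W $$ (i, j)))\<^sup>2) = 1"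
proof -
  note W = unitaryD[OF assms(1)]
  have "complex_of_real (\<Sum>j<n. (cmod (W $$ (i, j)))\<^sup>2) = (\<Sum>j<n. W $$ (i, j) * cnj (W $$ (i, j)))"
    by (simp add: complex_norm_square del: of_real_power)
  also have "\<dots> = (W * mat_adjoint W) $$ (i, i)"
    using W(1) assms(2) by (subst index_mult_mat_lessThan[of _ n n _ n]) auto
  also have "\<dots> = 1"
    using W assms(2) by simp
  finally show ?thesis
    by (metis of_real_eq_1_iff)
qed

lemma unitary_sum_col_sq:
  assumes "unitary n W" "j < n"
  shows "(\<Sum>i<n. (cmod (W $$ (i, j)))\<^sup>2) = 1"
proof -
  have "(\<Sum>i<n. (cmod (mat_adjoint W $$ (j, i)))\<^sup>2) = 1"
    using unitary_sum_row_sq[OF unitary_adjoint[OF assms(1)] assms(2)] .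
  then show ?thesis
    using unitaryD(1)[OF assms(1)] assms(2) by simp
qed

lemma scalar_prod_conjugate_mult_mat_vec:
  fixes A :: "complex mat"
  assumes A: "A \<in> carrier_mat n n" and v: "v \<in> carrier_vec n" and w: "w \<in> carrier_vec n"
  shows "conjugate v \<bullet> (A *\<^sub>v w) = conjugate (mat_adjoint A *\<^sub>v v) \<bullet> w"
proof -
  have "conjugate v \<bullet> (A *\<^sub>v w) = (\<Sum>i<n. \<Sum>l<n. cnj (v $ i) * (A $$ (i, l) * w $ l))"
    using A v w by (simp add: scalar_prod_def atLeast0LessThan sum_distrib_left)
  also have "\<dots> = (\<Sum>l<n. \<Sum>i<n. cnj (cnj (A $$ (i, l)) * v $ i) * w $ l)"
    by (subst sum.swap) (simp add: mult_ac)
  also have "\<dots> = conjugate (mat_adjoint A *\<^sub>v v) \<bullet> w"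
    using A v w by (simp add: scalar_prod_def atLeast0LessThan sum_distrib_right)
  finally show ?thesis .
qed

lemma quadratic_form_spectral_mat:
  assumes U: "U \<in> carrier_mat n n" and v: "v \<in> carrier_vec n"
  shows "conjugate v \<bullet> (spectral_mat n U a *\<^sub>v v)
     = complex_of_real (\<Sum>l<n. a l * (cmod ((mat_adjoint U *\<^sub>v v) $ l))\<^sup>2)"
proof -
  define z where "z = mat_adjoint U *\<^sub>v v"
  have z: "z \<in> carrier_vec n"
    using U v unfolding z_def by (simp add: mult_mat_vec_carrier[of _ n n])
  have "conjugate v \<bullet> (spectral_mat n U a *\<^sub>v v) = conjugate v \<bullet> (U *\<^sub>v (real_diag n a *\<^sub>v z))"
    using U v z unfolding spectral_mat_def z_def
    by (simp add: assoc_mult_mat_vec[of _ n n _ n] mult_carrier_mat[of _ n n _ n])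
  also have "\<dots> = conjugate z \<bullet> (real_diag n a *\<^sub>v z)"
    using scalar_prod_conjugate_mult_mat_vec[OF U v, of "real_diag n a *\<^sub>v z"] z
    unfolding z_def by (simp add: mult_mat_vec_carrier[of _ n n])
  also have "\<dots> = (\<Sum>l<n. complex_of_real (a l) * (z $ l * cnj (z $ l)))"
    using z by (simp add: scalar_prod_def atLeast0LessThan if_distrib[of "\<lambda>x. _ * x"] mult_ac cong: if_cong)
  also have "\<dots> = complex_of_real (\<Sum>l<n. a l * (cmod (z $ l))\<^sup>2)"
    by (simp add: complex_norm_square del: of_real_power)
  finally show ?thesis unfolding z_def .
qed

section \<open>Householder reflections and the spectral theorem\<close>

lemma cscalar_prod_self_real:
  fixes u :: "complex vec"
  shows "cnj (u \<bullet>c u) = u \<bullet>c u"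
proof -
  have "0 \<le> u \<bullet>c u" by (rule conjugate_square_ge_0_vec)
  then show ?thesis by (simp add: less_eq_complex_def complex_eq_iff)
qed

text \<open>For \<open>u = 0\<close> the factor \<open>2 / 0 = 0\<close> makes \<open>householder u\<close> the identity.\<close>

definition householder :: "complex vec \<Rightarrow> complex mat" where
  "householder u = mat (dim_vec u) (dim_vec u)
     (\<lambda>(i, j). of_bool (i = j) - 2 / (u \<bullet>c u) * u $ i * cnj (u $ j))"

lemma dim_householder [simp]:
  "dim_row (householder u) = dim_vec u" "dim_col (householder u) = dim_vec u"
  unfolding householder_def by simp_all

lemma householder_carrier [simp]: "u \<in> carrier_vec n \<Longrightarrow> householder u \<in> carrier_mat n n"
  unfolding householder_def by simp

lemma index_householder:
  "u \<in> carrier_vec n \<Longrightarrow> i < n \<Longrightarrow> j < n \<Longrightarrow>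
   householder u $$ (i, j) = of_bool (i = j) - 2 / (u \<bullet>c u) * u $ i * cnj (u $ j)"
  unfolding householder_def by simp

lemma mat_adjoint_householder: "u \<in> carrier_vec n \<Longrightarrow> mat_adjoint (householder u) = householder u"
  by (rule eq_matI) (auto simp: index_householder cscalar_prod_self_real)

lemma householder_mult_vec:
  assumes u: "u \<in> carrier_vec n" and w: "w \<in> carrier_vec n"
  shows "householder u *\<^sub>v w = w - (2 * (w \<bullet>c u) / (u \<bullet>c u)) \<cdot>\<^sub>v u"
proof (rule eq_vecI)
  define s where "s = 2 / (u \<bullet>c u)"
  fix i assume "i < dim_vec (w - (2 * (w \<bullet>c u) / (u \<bullet>c u)) \<cdot>\<^sub>v u)"
  with u w have i: "i < n" by simp
  have "(householder u *\<^sub>v w) $ i = (\<Sum>j<n. (of_bool (i = j) - s * u $ i * cnj (u $ j)) * w $ j)"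
    using u w i by (subst index_mult_mat_vec_lessThan[of _ n n]) (simp_all add: index_householder s_def)
  also have "\<dots> = w $ i - s * u $ i * (\<Sum>j<n. w $ j * cnj (u $ j))"
    using i by (simp add: algebra_simps sum_subtractf sum_distrib_left of_bool_def
        if_distrib[of "\<lambda>x. _ * x"] cong: if_cong)
  also have "\<dots> = (w - (2 * (w \<bullet>c u) / (u \<bullet>c u)) \<cdot>\<^sub>v u) $ i"
    using u w i by (simp add: s_def scalar_prod_def atLeast0LessThan)
  finally show "(householder u *\<^sub>v w) $ i = (w - (2 * (w \<bullet>c u) / (u \<bullet>c u)) \<cdot>\<^sub>v u) $ i" .
qed (use u w in simp)

lemma householder_involution:
  assumes u: "u \<in> carrier_vec n"
  shows "householder u * householder u = 1\<^sub>m n"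
proof (rule mat_col_eqI)
  have H: "householder u \<in> carrier_mat n n" using u by simp
  have "householder u *\<^sub>v (householder u *\<^sub>v w) = w" if w: "w \<in> carrier_vec n" for w
  proof (cases "u \<bullet>c u = 0")
    case True
    then have "householder u *\<^sub>v x = x" if "x \<in> carrier_vec n" for x
      using that u by (intro eq_vecI) (simp_all add: householder_mult_vec[OF u that] True)
    then show ?thesis using w H by simp
  next
    case False
    define c where "c = 2 * (w \<bullet>c u) / (u \<bullet>c u)"
    have "(w - c \<cdot>\<^sub>v u) \<bullet>c u = w \<bullet>c u - c * (u \<bullet>c u)"
      using u w by (simp add: minus_scalar_prod_distrib[of _ n] smult_scalar_prod_distrib[of _ n])
    then have "2 * ((w - c \<cdot>\<^sub>v u) \<bullet>c u) / (u \<bullet>c u) = - c"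
      using False unfolding c_def by (simp add: field_simps)
    then show ?thesis
      using u w unfolding householder_mult_vec[OF u w, folded c_def]
      by (subst householder_mult_vec[OF u]) (auto intro!: eq_vecI)
  qed
  note involutive = this
  show "col (householder u * householder u) j = col (1\<^sub>m n) j"
    if "j < dim_col (1\<^sub>m n)" for j
  proof -
    have j: "j < n" using that by simp
    have "col (householder u * householder u) j = householder u *\<^sub>v (householder u *\<^sub>v unit_vec n j)"
      unfolding col_mult2[OF H H j] mult_mat_vec_unit_vec[OF H j] ..
    also have "\<dots> = unit_vec n j"
      using involutive j by simp
    finally show ?thesis
      using j by simp
  qed
qed (use u in simp_all)

lemma unitary_householder: "u \<in> carrier_vec n \<Longrightarrow> unitary n (householder u)"
  unfolding unitary_def by (simp add: mat_adjoint_householder householder_involution)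

lemma col_householder_fixed:
  assumes "u \<in> carrier_vec n" "j < n" "u $ j = 0"
  shows "col (householder u) j = unit_vec n j"
  using assms by (intro eq_vecI) (auto simp: index_householder)

text \<open>The phase condition \<open>y\<^sub>k \<in> \<real>\<close> is what allows a reflection to map \<open>e\<^sub>k\<close> exactly onto \<open>y\<close>.\<close>

lemma col_householder_reflect:
  assumes y: "y \<in> carrier_vec n" and y_unit: "y \<bullet>c y = 1" and k: "k < n" and yk: "y $ k \<in> \<real>"
  shows "col (householder (unit_vec n k - y)) k = y"
proof -
  define u where "u = unit_vec n k - y"
  have u: "u \<in> carrier_vec n" using y unfolding u_def by simp
  have cnj_yk: "cnj (y $ k) = y $ k" using yk by (simp add: Reals_cnj_iff)
  have "u \<bullet>c u = (\<Sum>l<n. (if l = k then 1 else 0) - (if l = k then cnj (y $ l) + y $ l else 0) + y $ l * cnj (y $ l))"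
    using y k unfolding u_def by (auto simp: scalar_prod_def atLeast0LessThan algebra_simps intro!: sum.cong)
  also have "\<dots> = 1 - (cnj (y $ k) + y $ k) + y \<bullet>c y"
    using y k by (simp add: sum.distrib sum_subtractf scalar_prod_def atLeast0LessThan)
  finally have uu: "u \<bullet>c u = 2 - 2 * y $ k" using y_unit cnj_yk by simp
  show ?thesis
    unfolding u_def[symmetric]
  proof (cases "u \<bullet>c u = 0")
    case True
    then have "u = 0\<^sub>v n"
      using u by simp
    have "y = unit_vec n k"
    proof (rule eq_vecI)
      fix i assume "i < dim_vec (unit_vec n k)"
      with \<open>u = 0\<^sub>v n\<close> have "u $ i = 0" by simp
      with y \<open>i < dim_vec (unit_vec n k)\<close> show "y $ i = unit_vec n k $ i"
        by (simp add: u_def)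
    qed (use y in simp)
    moreover have "col (householder u) k = unit_vec n k"
      using \<open>u = 0\<^sub>v n\<close> k by (intro eq_vecI) (auto simp: index_householder[of _ n])
    ultimately show "col (householder u) k = y" by simp
  next
    case False
    have s: "2 / (u \<bullet>c u) * cnj (u $ k) = 1"
      using False k y cnj_yk unfolding uu by (simp add: u_def field_simps)
    have "householder u $$ (i, k) = y $ i" if "i < n" for i
    proof -
      have "householder u $$ (i, k) = of_bool (i = k) - u $ i * (2 / (u \<bullet>c u) * cnj (u $ k))"
        using index_householder[OF u that k] by (simp add: mult_ac)
      then show ?thesis
        using that k y unfolding s by (simp add: u_def)
    qed
    with k y u show "col (householder u) k = y"
      by (intro eq_vecI) auto
  qed
qed

lemma exists_eigenvector:
  fixes A :: "complex mat"
  assumes A: "A \<in> carrier_mat m m" and m: "0 < m"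
  shows "\<exists>e v. v \<in> carrier_vec m \<and> v \<noteq> 0\<^sub>v m \<and> A *\<^sub>v v = e \<cdot>\<^sub>v v"
proof -
  have "\<not> constant (poly (char_poly A))"
    unfolding constant_degree using degree_monic_char_poly[OF A] m by simp
  then obtain e where "poly (char_poly A) e = 0"
    using fundamental_theorem_of_algebra by blast
  then obtain v where "eigenvector A v e"
    using eigenvalue_root_char_poly[OF A] unfolding eigenvalue_def by blast
  then show ?thesis
    unfolding eigenvector_def using A by auto
qed

lemma sum_lessThan_add:
  fixes k m :: nat
  shows "(\<Sum>j<k + m. g j) = (\<Sum>j<k. g j) + (\<Sum>t<m. g (t + k))"
proof -
  have "(\<Sum>j<k + m. g j) = (\<Sum>j<k. g j) + (\<Sum>j = k..<k + m. g j)"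
    unfolding lessThan_atLeast0 by (simp add: sum.atLeastLessThan_concat)
  also have "(\<Sum>j = k..<k + m. g j) = (\<Sum>t<m. g (t + k))"
    using sum.shift_bounds_nat_ivl[of g 0 k m] by (simp add: atLeast0LessThan add.commute)
  finally show ?thesis .
qed

lemma hermitian_block_eigenvector:
  fixes C :: "complex mat"
  assumes C: "C \<in> carrier_mat n n" and herm: "mat_adjoint C = C" and k: "k < n"
    and diag: "\<forall>i<n. \<forall>j<k. i \<noteq> j \<longrightarrow> C $$ (i, j) = 0"
  shows "\<exists>e w. w \<in> carrier_vec n \<and> w \<noteq> 0\<^sub>v n \<and> (\<forall>l<k. w $ l = 0) \<and> C *\<^sub>v w = e \<cdot>\<^sub>v w"
proof -
  have C_row: "C $$ (i, j) = 0" if "i < k" "j < n" "i \<noteq> j" for i j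
  proof -
    have "C $$ (i, j) = cnj (C $$ (j, i))"
      using that k C by (subst herm[symmetric]) simp
    then show ?thesis using diag that k by simp
  qed
  define m where "m = n - k"
  have n: "n = k + m" and m: "0 < m" using k by (auto simp: m_def)
  define C' where "C' = mat m m (\<lambda>(i, j). C $$ (i + k, j + k))"
  obtain e v where v: "v \<in> carrier_vec m" "v \<noteq> 0\<^sub>v m" and ev: "C' *\<^sub>v v = e \<cdot>\<^sub>v v"
    using exists_eigenvector[of C' m] m by (auto simp: C'_def)
  define w where "w = vec n (\<lambda>l. if l < k then 0 else v $ (l - k))"
  have "(C *\<^sub>v w) $ l = (e \<cdot>\<^sub>v w) $ l" if l: "l < n" for l
  proof -
    have "(C *\<^sub>v w) $ l = (\<Sum>j<n. C $$ (l, j) * w $ j)"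
      using C l by (intro index_mult_mat_vec_lessThan) (auto simp: w_def)
    also have "\<dots> = (\<Sum>t<m. C $$ (l, t + k) * v $ t)"
      unfolding n sum_lessThan_add by (simp add: w_def n)
    also have "\<dots> = (e \<cdot>\<^sub>v w) $ l"
    proof (cases "l < k")
      case True
      then show ?thesis using C_row l n by (simp add: w_def)
    next
      case False
      then have "(C' *\<^sub>v v) $ (l - k) = (\<Sum>t<m. C $$ (l, t + k) * v $ t)"
        using v l n by (simp add: C'_def index_mult_mat_vec_lessThan[of _ m m] del: index_mult_mat_vec)
      then show ?thesis
        using ev False v l n by (simp add: w_def)
    qed
    finally show ?thesis .
  qed
  moreover have "w \<noteq> 0\<^sub>v n"
  proof
    assume "w = 0\<^sub>v n"
    have "v $ t = 0" if "t < m" for t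
    proof -
      have "w $ (t + k) = 0" using \<open>w = 0\<^sub>v n\<close> that n by simp
      then show ?thesis using that n by (simp add: w_def)
    qed
    with v show False by (auto intro!: eq_vecI)
  qed
  ultimately show ?thesis
    using C k by (intro exI[of _ e] exI[of _ w]) (auto simp: w_def intro!: eq_vecI)
qed

lemma unit_eigenvector_real_at:
  fixes C :: "complex mat"
  assumes C: "C \<in> carrier_mat n n" and w: "w \<in> carrier_vec n" "w \<noteq> 0\<^sub>v n" and ev: "C *\<^sub>v w = e \<cdot>\<^sub>v w"
    and k: "k < n"
  shows "\<exists>y. y \<in> carrier_vec n \<and> y \<bullet>c y = 1 \<and> y $ k \<in> \<real> \<and> (\<forall>l<n. w $ l = 0 \<longrightarrow> y $ l = 0)
     \<and> C *\<^sub>v y = e \<cdot>\<^sub>v y"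
proof -
  define N where "N = Re (w \<bullet>c w)"
  have ww: "w \<bullet>c w = complex_of_real N" and N: "0 < N"
    using conjugate_square_greater_0_vec[OF w(1)] w(2)
    by (auto simp: N_def less_complex_def complex_eq_iff)
  define ph where "ph = (if w $ k = 0 then 1 else cnj (w $ k) / complex_of_real (cmod (w $ k)))"
  have "cmod ph = 1"
    by (simp add: ph_def norm_divide)
  then have ph: "ph * cnj ph = 1" "ph * w $ k \<in> \<real>"
    by (auto simp: complex_norm_square[symmetric] ph_def mult.commute[of "cnj _"] field_simps power2_eq_square)
  define c where "c = ph / complex_of_real (sqrt N)"
  have "complex_of_real (sqrt N) * complex_of_real (sqrt N) = complex_of_real N"
    using N by (simp flip: of_real_mult)
  then have cc: "c * cnj c * complex_of_real N = 1"
    using N ph(1) by (simp add: c_def field_simps)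
  define y where "y = c \<cdot>\<^sub>v w"
  have "y \<bullet>c y = c * cnj c * (w \<bullet>c w)"
    using w by (simp add: y_def conjugate_smult_vec mult.assoc)
  moreover have "y $ k \<in> \<real>"
    using ph(2) N k w by (simp add: y_def c_def)
  moreover have "C *\<^sub>v y = e \<cdot>\<^sub>v y"
    using C w ev by (simp add: y_def mult_mat_vec smult_smult_assoc mult.commute)
  ultimately show ?thesis
    using w cc ww by (intro exI[of _ y]) (auto simp: y_def)
qed

lemma col_mult_mult:
  assumes "A \<in> carrier_mat n n" "B \<in> carrier_mat n n" "C \<in> carrier_mat n n" "j < n"
  shows "col (A * B * C) j = A *\<^sub>v (B *\<^sub>v col C j)"
proof -
  have "col (A * B * C) j = (A * B) *\<^sub>v col C j"
    using assms by (intro col_mult2[of _ n n]) (simp_all add: mult_carrier_mat[of _ n n _ n])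
  also have "\<dots> = A *\<^sub>v (B *\<^sub>v col C j)"
    using assms by (intro assoc_mult_mat_vec[of _ n n _ n]) simp_all
  finally show ?thesis .
qed

lemma index_eq_0_of_col_eq_smult_unit_vec:
  fixes M :: "'a :: semiring_1 mat"
  assumes "M \<in> carrier_mat n n" "col M j = c \<cdot>\<^sub>v unit_vec n j" "i < n" "j < n" "i \<noteq> j"
  shows "M $$ (i, j) = 0"
proof -
  have "M $$ (i, j) = col M j $ i"
    using assms(1,3,4) by simp
  then show ?thesis
    using assms(2-5) by simp
qed

lemma hermitian_diagonalize_column:
  fixes C :: "complex mat"
  assumes C: "C \<in> carrier_mat n n" and herm: "mat_adjoint C = C" and k: "k < n"
    and diag: "\<forall>i<n. \<forall>j<k. i \<noteq> j \<longrightarrow> C $$ (i, j) = 0"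
  shows "\<exists>H. unitary n H \<and> (\<forall>i<n. \<forall>j<Suc k. i \<noteq> j \<longrightarrow> (mat_adjoint H * C * H) $$ (i, j) = 0)"
proof -
  obtain e w where w: "w \<in> carrier_vec n" "w \<noteq> 0\<^sub>v n" "\<forall>l<k. w $ l = 0" and ev_w: "C *\<^sub>v w = e \<cdot>\<^sub>v w"
    using hermitian_block_eigenvector[OF assms] by blast
  obtain y where y: "y \<in> carrier_vec n" "y \<bullet>c y = 1" "y $ k \<in> \<real>" "\<forall>l<k. y $ l = 0"
    and ev: "C *\<^sub>v y = e \<cdot>\<^sub>v y"
    using unit_eigenvector_real_at[OF C w(1,2) ev_w k] w(3) k by auto
  define H where "H = householder (unit_vec n k - y)"
  have H: "H \<in> carrier_mat n n" "unitary n H" "mat_adjoint H = H" "H * H = 1\<^sub>m n"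
    using y unfolding H_def
    by (simp_all add: unitary_householder mat_adjoint_householder[of _ n] householder_involution)
  have col_H: "col H j = unit_vec n j" if "j < k" for j
    unfolding H_def using y that k by (intro col_householder_fixed) auto
  have col_Hk: "col H k = y"
    unfolding H_def using col_householder_reflect[OF y(1,2) k y(3)] .
  have col: "col (mat_adjoint H * C * H) j = H *\<^sub>v (C *\<^sub>v col H j)" if "j < n" for j
    using col_mult_mult[of "mat_adjoint H" n C H j] H(1,3) C that by simp
  have cols: "\<exists>c. col (mat_adjoint H * C * H) j = c \<cdot>\<^sub>v unit_vec n j" if j: "j < Suc k" for j
  proof (cases "j < k")
    case True
    have "col C j = C $$ (j, j) \<cdot>\<^sub>v unit_vec n j"
      using diag C True k by (intro eq_vecI) auto
    then have "col (mat_adjoint H * C * H) j = C $$ (j, j) \<cdot>\<^sub>v (H *\<^sub>v unit_vec n j)"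
      using col[of j] col_H[OF True] H(1) C True k by (simp add: mult_mat_vec_unit_vec mult_mat_vec)
    then show ?thesis
      using H(1) col_H[OF True] True k by (auto simp: mult_mat_vec_unit_vec)
  next
    case False
    then have "j = k" using j by simp
    have "col (mat_adjoint H * C * H) k = e \<cdot>\<^sub>v (H *\<^sub>v col H k)"
      using col[of k] col_Hk ev H(1) y(1) k by (simp add: mult_mat_vec)
    also have "H *\<^sub>v col H k = unit_vec n k"
      using H k by (simp add: col_mult2[symmetric])
    finally show ?thesis using \<open>j = k\<close> by blast
  qed
  have "(mat_adjoint H * C * H) $$ (i, j) = 0" if ij: "i < n" "j < Suc k" "i \<noteq> j" for i j
  proof -
    obtain c where "col (mat_adjoint H * C * H) j = c \<cdot>\<^sub>v unit_vec n j"
      using cols ij(2) by blast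
    moreover have "mat_adjoint H * C * H \<in> carrier_mat n n"
      using H(1) C by (simp add: mult_carrier_mat[of _ n n _ n])
    ultimately show ?thesis
      using ij k by (intro index_eq_0_of_col_eq_smult_unit_vec[of _ n]) auto
  qed
  with H(2) show ?thesis by blast
qed

lemma self_adjoint_conj:
  fixes A V :: "complex mat"
  assumes A: "A \<in> carrier_mat n n" "mat_adjoint A = A" and V: "V \<in> carrier_mat n n"
  shows "mat_adjoint (mat_adjoint V * A * V) = mat_adjoint V * A * V"
  using assms by (simp add: mat_adjoint_mult[of _ n n _ n] mult_carrier_mat[of _ n n _ n]
      assoc_mult_mat[of _ n n _ n _ n])

lemma hermitian_diagonalize_columns:
  fixes A :: "complex mat"
  assumes A: "A \<in> carrier_mat n n" "mat_adjoint A = A" and k: "k \<le> n"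
  shows "\<exists>V. unitary n V \<and> (\<forall>i<n. \<forall>j<k. i \<noteq> j \<longrightarrow> (mat_adjoint V * A * V) $$ (i, j) = 0)"
  using k
proof (induction k)
  case 0
  show ?case using unitary_one by blast
next
  case (Suc k)
  then obtain V where V: "unitary n V"
    and diag: "\<forall>i<n. \<forall>j<k. i \<noteq> j \<longrightarrow> (mat_adjoint V * A * V) $$ (i, j) = 0"
    by auto
  note V_carrier = unitaryD(1)[OF V]
  obtain H where H: "unitary n H"
    and diag': "\<forall>i<n. \<forall>j<Suc k. i \<noteq> j \<longrightarrow> (mat_adjoint H * (mat_adjoint V * A * V) * H) $$ (i, j) = 0"
    using hermitian_diagonalize_column[OF _ self_adjoint_conj[OF A V_carrier] _ diag] A V_carrier Suc.prems
    by (auto simp: mult_carrier_mat[of _ n n _ n])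
  have "mat_adjoint (V * H) * A * (V * H) = mat_adjoint H * (mat_adjoint V * A * V) * H"
    using A V_carrier unitaryD(1)[OF H]
    by (simp add: mat_adjoint_mult[of _ n n _ n] mult_carrier_mat[of _ n n _ n] assoc_mult_mat[of _ n n _ n _ n])
  then show ?case
    using unitary_mult[OF V H] diag' by metis
qed

lemma self_adjoint_diagonal_eq_real_diag:
  assumes D: "D \<in> carrier_mat n n" "mat_adjoint D = D"
    and diag: "\<forall>i<n. \<forall>j<n. i \<noteq> j \<longrightarrow> D $$ (i, j) = 0"
  shows "D = real_diag n (\<lambda>i. Re (D $$ (i, i)))"
proof (rule eq_matI)
  fix i j assume "i < dim_row (real_diag n (\<lambda>i. Re (D $$ (i, i))))" "j < dim_col (real_diag n (\<lambda>i. Re (D $$ (i, i))))"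
  then have ij: "i < n" "j < n" by auto
  have "cnj (D $$ (i, i)) = D $$ (i, i)"
    using D ij by (metis carrier_matD index_mat_adjoint)
  then show "D $$ (i, j) = real_diag n (\<lambda>i. Re (D $$ (i, i))) $$ (i, j)"
    using diag ij by (auto simp: complex_eq_iff)
qed (use D in auto)

theorem hermitian_spectral_decomposition:
  assumes "hermitian n A"
  shows "\<exists>V a. unitary n V \<and> A = spectral_mat n V a"
proof -
  have A: "A \<in> carrier_mat n n" "mat_adjoint A = A"
    using assms unfolding hermitian_def by auto
  obtain V where V: "unitary n V"
    and diag: "\<forall>i<n. \<forall>j<n. i \<noteq> j \<longrightarrow> (mat_adjoint V * A * V) $$ (i, j) = 0"
    using hermitian_diagonalize_columns[OF A order.refl] by blast
  note V_mat = unitaryD[OF V]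
  define D where "D = mat_adjoint V * A * V"
  have D: "D \<in> carrier_mat n n" "mat_adjoint D = D"
    using A V_mat(1) unfolding D_def by (simp_all add: self_adjoint_conj mult_carrier_mat[of _ n n _ n])
  have "V * D * mat_adjoint V = (V * mat_adjoint V) * A * (V * mat_adjoint V)"
    using A(1) V_mat(1) unfolding D_def
    by (simp add: mult_carrier_mat[of _ n n _ n] assoc_mult_mat[of _ n n _ n _ n])
  then have "A = V * real_diag n (\<lambda>i. Re (D $$ (i, i))) * mat_adjoint V"
    using A(1) V_mat self_adjoint_diagonal_eq_real_diag[OF D diag[folded D_def]] by simp
  with V show ?thesis
    unfolding spectral_mat_def by blast
qed

section \<open>Eigenvalues and density matrices\<close>

lemma char_poly_spectral_mat:
  assumes "unitary n V"
  shows "char_poly (spectral_mat n V a) = (\<Prod>c\<leftarrow>map (\<lambda>i. complex_of_real (a i)) [0..<n]. [:- c, 1:])"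
proof -
  note V = unitaryD[OF assms]
  have "similar_mat (spectral_mat n V a) (real_diag n a)"
    unfolding similar_mat_def similar_mat_wit_def spectral_mat_def Let_def using V
    by (intro exI[of _ V] exI[of _ "mat_adjoint V"]) auto
  then have "char_poly (spectral_mat n V a) = char_poly (real_diag n a)"
    by (rule char_poly_similar)
  also have "\<dots> = (\<Prod>c\<leftarrow>diag_mat (real_diag n a). [:- c, 1:])"
    by (rule char_poly_upper_triangular[of _ n]) (auto simp: upper_triangular_def)
  also have "diag_mat (real_diag n a) = map (\<lambda>i. complex_of_real (a i)) [0..<n]"
    by (simp add: diag_mat_def)
  finally show ?thesis .
qed

lemma order_prod_linear_factors: "order (x :: complex) (\<Prod>c\<leftarrow>cs. [:- c, 1:]) = count_list cs x"
proof (induction cs)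
  case Nil
  then show ?case by (simp add: order_0I)
next
  case (Cons c cs)
  have "(\<Prod>c\<leftarrow>cs. [:- c, 1:]) \<noteq> (0 :: complex poly)"
    by (auto simp: prod_list_zero_iff)
  then have "order x ([:- c, 1:] * (\<Prod>c\<leftarrow>cs. [:- c, 1:])) = order x [:- c, 1:] + order x (\<Prod>c\<leftarrow>cs. [:- c, 1:])"
    by (intro order_mult) (metis mult_eq_0_iff pCons_eq_0_iff zero_neq_one)
  then show ?case
    using Cons by (simp add: order_linear')
qed

lemma rev_sort_permutation:
  fixes b :: "nat \<Rightarrow> 'a :: linorder"
  shows "\<exists>p. p permutes {..<n} \<and> (\<forall>i<n. rev (sort (map b [0..<n])) ! i = b (p i))"
proof -
  define xs where "xs = map b [0..<n]"
  have "mset (rev (sort xs)) = mset xs" by simp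
  then obtain p where p: "p permutes {..<length xs}" and p_xs: "permute_list p xs = rev (sort xs)"
    by (rule mset_eq_permutation)
  have "rev (sort xs) ! i = b (p i)" if "i < n" for i
    using permute_list_nth[OF p, of i] permutes_in_image[OF p, of i] p_xs that by (simp add: xs_def)
  with p show ?thesis
    unfolding xs_def by auto
qed

lemma eigvals_spectral_mat:
  assumes "unitary n V"
  shows "\<exists>p. p permutes {..<n} \<and> eigvals (spectral_mat n V a) = vec n (\<lambda>i. a (p i))"
proof -
  define M where "M = spectral_mat n V a"
  define xs where "xs = map a [0..<n]"
  have dim_M: "dim_row M = n"
    using spectral_mat_carrier[OF unitaryD(1)[OF assms]] unfolding M_def by blast
  have order: "order (complex_of_real x) (char_poly M) = count_list xs x" for x
  proof -
    have "order (complex_of_real x) (char_poly M) = count_list (map complex_of_real xs) (complex_of_real x)"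
      unfolding M_def xs_def char_poly_spectral_mat[OF assms] order_prod_linear_factors by (simp add: comp_def)
    also have "\<dots> = count_list xs x"
      by (induction xs) auto
    finally show ?thesis .
  qed
  have "length ys = dim_row M \<and> sorted_wrt (\<ge>) ys \<and> (\<forall>x. count_list ys x = order (complex_of_real x) (char_poly M))
      \<longleftrightarrow> ys = rev (sort xs)" for ys
  proof
    assume "length ys = dim_row M \<and> sorted_wrt (\<ge>) ys \<and> (\<forall>x. count_list ys x = order (complex_of_real x) (char_poly M))"
    then have "mset (rev ys) = mset xs" "sorted (rev ys)"
      unfolding order by (auto simp: multiset_eq_iff count_mset sorted_wrt_rev)
    then show "ys = rev (sort xs)"
      by (metis properties_for_sort rev_rev_ident)
  next
    assume "ys = rev (sort xs)"
    then show "length ys = dim_row M \<and> sorted_wrt (\<ge>) ys \<and> (\<forall>x. count_list ys x = order (complex_of_real x) (char_poly M))"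
      unfolding order using dim_M
      by (auto simp: xs_def sorted_wrt_rev simp flip: count_mset)
  qed
  then have "eigvals M = vec_of_list (rev (sort xs))"
    unfolding eigvals_def by simp
  moreover obtain p where "p permutes {..<n}" "\<forall>i<n. rev (sort xs) ! i = a (p i)"
    using rev_sort_permutation[of n a] unfolding xs_def by blast
  ultimately show ?thesis
    unfolding M_def by (intro exI[of _ p]) (auto simp: xs_def vec_of_list_index intro!: eq_vecI)
qed

lemma perm_invariant_eigvals_UDU:
  assumes f: "perm_invariant n f" and V: "unitary n V" and x: "x \<in> simplex n"
  shows "f (eigvals (UDU n V x)) = f x"
proof -
  obtain p where "p permutes {..<n}" and "eigvals (UDU n V x) = vec n (\<lambda>i. x $ p i)"
    unfolding UDU_eq_spectral_mat using eigvals_spectral_mat[OF V] by blast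
  then show ?thesis
    using f x unfolding perm_invariant_def by simp
qed

lemma UDU_in_Dens:
  assumes U: "unitary n U" and x: "x \<in> simplex n"
  shows "UDU n U x \<in> Dens n"
proof -
  note U = unitaryD[OF U]
  have x_nonneg: "\<And>i. i < n \<Longrightarrow> 0 \<le> x $ i" and x_sum: "(\<Sum>i<n. x $ i) = 1"
    using x by (auto simp: simplex_def)
  have "Im (conjugate v \<bullet> (UDU n U x *\<^sub>v v)) = 0 \<and> 0 \<le> Re (conjugate v \<bullet> (UDU n U x *\<^sub>v v))"
    if "v \<in> carrier_vec n" for v
    unfolding UDU_eq_spectral_mat quadratic_form_spectral_mat[OF U(1) that]
    using x_nonneg by (auto intro!: sum_nonneg)
  moreover have "mtrace (UDU n U x) = 1"
    unfolding UDU_eq_spectral_mat mtrace_spectral_mat[OF assms(1)] x_sum by simp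
  ultimately show ?thesis
    unfolding Dens_def UDU_eq_spectral_mat using hermitian_spectral_mat[OF U(1)] by blast
qed

lemma Dens_spectral_decomposition:
  assumes rho: "\<rho> \<in> Dens n"
  shows "\<exists>V \<mu>. unitary n V \<and> \<mu> \<in> simplex n \<and> \<rho> = UDU n V \<mu>"
proof -
  obtain V a where V: "unitary n V" and rho_eq: "\<rho> = spectral_mat n V a"
    using hermitian_spectral_decomposition rho unfolding Dens_def by blast
  note V_mat = unitaryD[OF V]
  have "0 \<le> a i" if i: "i < n" for i
  proof -
    have "mat_adjoint V *\<^sub>v col V i = col (mat_adjoint V * V) i"
      using V_mat(1) i by (intro col_mult2[symmetric]) auto
    then have "mat_adjoint V *\<^sub>v col V i = unit_vec n i"
      using V_mat i by simp
    moreover have "(\<Sum>l<n. a l * (cmod (unit_vec n i $ l))\<^sup>2) = (\<Sum>l<n. if l = i then a l else 0)"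
      using i by (intro sum.cong) auto
    ultimately have "conjugate (col V i) \<bullet> (\<rho> *\<^sub>v col V i) = complex_of_real (a i)"
      unfolding rho_eq using V_mat(1) i by (simp add: quadratic_form_spectral_mat[of _ n])
    moreover have "0 \<le> Re (conjugate (col V i) \<bullet> (\<rho> *\<^sub>v col V i))"
      using rho V_mat(1) i unfolding Dens_def by simp
    ultimately show ?thesis by simp
  qed
  moreover have "complex_of_real (\<Sum>i<n. a i) = 1"
    using rho unfolding rho_eq mtrace_spectral_mat[OF V, symmetric] Dens_def by blast
  then have "(\<Sum>i<n. a i) = 1"
    by (metis of_real_eq_1_iff)
  ultimately have "vec n a \<in> simplex n"
    unfolding simplex_def by simp
  moreover have "\<rho> = UDU n V (vec n a)"
    unfolding rho_eq UDU_eq_spectral_mat spectral_mat_def real_diag_def by (auto intro!: arg_cong2[where f = "(*)"] eq_matI)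
  ultimately show ?thesis
    using V by blast
qed

section \<open>Doubly stochastic matrices\<close>

lemma sum_mult_weights_le_prefix:
  fixes b w :: "nat \<Rightarrow> real"
  assumes m: "m \<le> n" and w: "\<And>j. j < n \<Longrightarrow> 0 \<le> w j \<and> w j \<le> 1"
    and w_sum: "(\<Sum>j<n. w j) = real m"
    and b: "\<And>i j. i \<le> j \<Longrightarrow> j < n \<Longrightarrow> b j \<le> b i"
  shows "(\<Sum>j<n. b j * w j) \<le> (\<Sum>j<m. b j)"
proof (cases "m = 0")
  case True
  then have "\<forall>j\<in>{..<n}. w j = 0"
    using sum_nonneg_eq_0_iff[of "{..<n}" w] w_sum w by auto
  then show ?thesis using True by simp
next
  case False
  define t where "t = b (m - 1)"
  have split: "(\<Sum>j<n. g j) = (\<Sum>j<m. g j) + (\<Sum>j\<in>{m..<n}. g j)" for g :: "nat \<Rightarrow> real"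
    using m by (simp add: lessThan_atLeast0 sum.atLeastLessThan_concat)
  have "(\<Sum>j<m. t * (1 - w j)) = t * (\<Sum>j\<in>{m..<n}. w j)"
    using w_sum split[of w] by (simp add: sum_distrib_left[symmetric] sum_subtractf)
  also have "\<dots> = (\<Sum>j\<in>{m..<n}. t * w j)"
    by (simp add: sum_distrib_left)
  finally have "(\<Sum>j<m. t * (1 - w j)) = (\<Sum>j\<in>{m..<n}. t * w j)" .
  moreover have "(\<Sum>j<m. t * (1 - w j)) \<le> (\<Sum>j<m. b j * (1 - w j))"
    by (rule sum_mono) (use False m w b in \<open>auto simp: t_def intro!: mult_right_mono\<close>)
  moreover have "(\<Sum>j\<in>{m..<n}. b j * w j) \<le> (\<Sum>j\<in>{m..<n}. t * w j)"
    by (rule sum_mono) (use False m w b in \<open>auto simp: t_def intro!: mult_right_mono\<close>)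
  moreover have "(\<Sum>j<m. b j) - (\<Sum>j<n. b j * w j) = (\<Sum>j<m. b j * (1 - w j)) - (\<Sum>j\<in>{m..<n}. b j * w j)"
    using split[of "\<lambda>j. b j * w j"] by (simp add: sum_subtractf algebra_simps)
  ultimately show ?thesis by linarith
qed

lemma sum_mult_le_of_prefix_sums_le:
  fixes a x y :: "nat \<Rightarrow> real"
  assumes "\<And>i j. i \<le> j \<Longrightarrow> j < n \<Longrightarrow> a j \<le> a i" "\<And>i. i < n \<Longrightarrow> 0 \<le> a i"
    and "\<And>k. k \<le> n \<Longrightarrow> (\<Sum>i<k. x i) \<le> (\<Sum>i<k. y i)"
  shows "(\<Sum>i<n. a i * x i) \<le> (\<Sum>i<n. a i * y i)"
  using assms
proof (induction n arbitrary: a)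
  case 0
  then show ?case by simp
next
  case (Suc n)
  define c where "c = a n"
  have IH: "(\<Sum>i<n. (a i - c) * x i) \<le> (\<Sum>i<n. (a i - c) * y i)"
    by (rule Suc.IH) (use Suc.prems in \<open>auto simp: c_def\<close>)
  have last: "c * (\<Sum>i<Suc n. x i) \<le> c * (\<Sum>i<Suc n. y i)"
    by (rule mult_left_mono) (use Suc.prems(2)[of n] Suc.prems(3)[of "Suc n"] in \<open>auto simp: c_def\<close>)
  have split: "(\<Sum>i<Suc n. a i * z i) = (\<Sum>i<n. (a i - c) * z i) + c * (\<Sum>i<Suc n. z i)" for z
    by (simp add: c_def algebra_simps sum_distrib_left sum_subtractf)
  show ?case
    unfolding split[of x] split[of y] using IH last by (rule add_mono)
qed

lemma sum_mult_le_of_majorized: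
  fixes a x y :: "nat \<Rightarrow> real"
  assumes a: "\<And>i j. i \<le> j \<Longrightarrow> j < n \<Longrightarrow> a j \<le> a i"
    and prefix: "\<And>k. k \<le> n \<Longrightarrow> (\<Sum>i<k. x i) \<le> (\<Sum>i<k. y i)"
    and total: "(\<Sum>i<n. x i) = (\<Sum>i<n. y i)"
  shows "(\<Sum>i<n. a i * x i) \<le> (\<Sum>i<n. a i * y i)"
proof (cases n)
  case 0
  then show ?thesis by simp
next
  case (Suc m)
  define c where "c = a m"
  have "(\<Sum>i<n. (a i - c) * x i) \<le> (\<Sum>i<n. (a i - c) * y i)"
    by (rule sum_mult_le_of_prefix_sums_le) (use a prefix Suc in \<open>auto simp: c_def\<close>)
  moreover have "(\<Sum>i<n. a i * z i) = (\<Sum>i<n. (a i - c) * z i) + c * (\<Sum>i<n. z i)" for z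
    by (simp add: algebra_simps sum_distrib_left sum_subtractf)
  ultimately show ?thesis
    using total by simp
qed

definition doubly_stochastic :: "nat \<Rightarrow> (nat \<Rightarrow> nat \<Rightarrow> real) \<Rightarrow> bool" where
  "doubly_stochastic n P \<longleftrightarrow> (\<forall>i<n. \<forall>j<n. 0 \<le> P i j) \<and>
     (\<forall>i<n. (\<Sum>j<n. P i j) = 1) \<and> (\<forall>j<n. (\<Sum>i<n. P i j) = 1)"

lemma doubly_stochastic_sum_weighted_cols:
  assumes "doubly_stochastic n P"
  shows "(\<Sum>i<n. \<Sum>j<n. b j * P i j) = (\<Sum>j<n. b j)"
proof -
  have "(\<Sum>i<n. \<Sum>j<n. b j * P i j) = (\<Sum>j<n. b j * (\<Sum>i<n. P i j))"
    by (subst sum.swap) (simp add: sum_distrib_left)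
  then show ?thesis
    using assms unfolding doubly_stochastic_def by simp
qed

lemma doubly_stochastic_sum_le_sorted:
  fixes a b :: "nat \<Rightarrow> real"
  assumes P: "doubly_stochastic n P"
    and a_dec: "\<And>i j. i \<le> j \<Longrightarrow> j < n \<Longrightarrow> a j \<le> a i"
    and b_dec: "\<And>i j. i \<le> j \<Longrightarrow> j < n \<Longrightarrow> b j \<le> b i"
  shows "(\<Sum>i<n. \<Sum>j<n. a i * b j * P i j) \<le> (\<Sum>i<n. a i * b i)"
proof -
  have P_nonneg: "\<And>i j. i < n \<Longrightarrow> j < n \<Longrightarrow> 0 \<le> P i j"
    and P_row: "\<And>i. i < n \<Longrightarrow> (\<Sum>j<n. P i j) = 1"
    and P_col: "\<And>j. j < n \<Longrightarrow> (\<Sum>i<n. P i j) = 1"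
    using P unfolding doubly_stochastic_def by auto
  define x where "x i = (\<Sum>j<n. b j * P i j)" for i
  have prefix: "(\<Sum>i<k. x i) \<le> (\<Sum>i<k. b i)" if k: "k \<le> n" for k
  proof -
    define w where "w j = (\<Sum>i<k. P i j)" for j
    have "(\<Sum>i<k. x i) = (\<Sum>j<n. b j * w j)"
      unfolding x_def w_def by (subst sum.swap) (simp add: sum_distrib_left)
    also have "\<dots> \<le> (\<Sum>j<k. b j)"
    proof (rule sum_mult_weights_le_prefix[OF k _ _ b_dec])
      fix j assume j: "j < n"
      have "0 \<le> w j" unfolding w_def using P_nonneg j k by (intro sum_nonneg) auto
      moreover have "w j \<le> (\<Sum>i<n. P i j)" unfolding w_def
        by (rule sum_mono2) (use P_nonneg j k in auto)
      ultimately show "0 \<le> w j \<and> w j \<le> 1" using P_col j by simp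
    next
      have "(\<Sum>j<n. w j) = (\<Sum>i<k. \<Sum>j<n. P i j)" unfolding w_def by (rule sum.swap)
      also have "\<dots> = real k" using P_row k by simp
      finally show "(\<Sum>j<n. w j) = real k" .
    qed
    finally show ?thesis .
  qed
  have total: "(\<Sum>i<n. x i) = (\<Sum>i<n. b i)"
    unfolding x_def by (rule doubly_stochastic_sum_weighted_cols[OF P])
  have "(\<Sum>i<n. a i * x i) \<le> (\<Sum>i<n. a i * b i)"
    using a_dec prefix total by (rule sum_mult_le_of_majorized)
  then show ?thesis
    by (simp add: x_def sum_distrib_left mult.assoc)
qed

lemma exists_sorting_permutation:
  fixes b :: "nat \<Rightarrow> real"
  shows "\<exists>p. p permutes {..<n} \<and> (\<forall>i j. i \<le> j \<longrightarrow> j < n \<longrightarrow> b (p j) \<le> b (p i))"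
proof -
  obtain p where p: "p permutes {..<n}" and nth: "\<forall>i<n. rev (sort (map b [0..<n])) ! i = b (p i)"
    using rev_sort_permutation by blast
  have "sorted (rev (rev (sort (map b [0..<n]))))" by simp
  then have "\<forall>i j. i \<le> j \<longrightarrow> j < n \<longrightarrow> rev (sort (map b [0..<n])) ! j \<le> rev (sort (map b [0..<n])) ! i"
    unfolding sorted_rev_iff_nth_mono by simp
  with p nth show ?thesis
    by auto
qed

lemma doubly_stochastic_sum_le_permutation:
  fixes a b :: "nat \<Rightarrow> real"
  assumes P: "doubly_stochastic n P"
  shows "\<exists>\<sigma>. \<sigma> permutes {..<n} \<and> (\<Sum>i<n. \<Sum>j<n. a i * b j * P i j) \<le> (\<Sum>i<n. a i * b (\<sigma> i))"
proof -
  obtain \<alpha> where \<alpha>: "\<alpha> permutes {..<n}" and a_dec: "\<And>i j. i \<le> j \<Longrightarrow> j < n \<Longrightarrow> a (\<alpha> j) \<le> a (\<alpha> i)"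
    using exists_sorting_permutation[of n a] by blast
  obtain \<beta> where \<beta>: "\<beta> permutes {..<n}" and b_dec: "\<And>i j. i \<le> j \<Longrightarrow> j < n \<Longrightarrow> b (\<beta> j) \<le> b (\<beta> i)"
    using exists_sorting_permutation[of n b] by blast
  have \<alpha>_lt: "\<And>i. i < n \<Longrightarrow> \<alpha> i < n" and \<beta>_lt: "\<And>i. i < n \<Longrightarrow> \<beta> i < n"
    using permutes_in_image[OF \<alpha>] permutes_in_image[OF \<beta>] by auto
  have sum_\<alpha>: "(\<Sum>i<n. g (\<alpha> i)) = (\<Sum>i<n. g i)" and sum_\<beta>: "(\<Sum>i<n. g (\<beta> i)) = (\<Sum>i<n. g i)"
    for g :: "nat \<Rightarrow> real"
    using sum.permute[OF \<alpha>, of g] sum.permute[OF \<beta>, of g] by (simp_all add: comp_def)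
  define P' where "P' i j = P (\<alpha> i) (\<beta> j)" for i j
  have "(\<Sum>i<n. P (\<alpha> i) c) = (\<Sum>i<n. P i c)" "(\<Sum>j<n. P c (\<beta> j)) = (\<Sum>j<n. P c j)" for c
    using sum_\<alpha>[of "\<lambda>i. P i c"] sum_\<beta>[of "P c"] by simp_all
  then have "doubly_stochastic n P'"
    using P \<alpha>_lt \<beta>_lt unfolding doubly_stochastic_def P'_def by simp
  then have "(\<Sum>i<n. \<Sum>j<n. a (\<alpha> i) * b (\<beta> j) * P' i j) \<le> (\<Sum>i<n. a (\<alpha> i) * b (\<beta> i))"
    using a_dec b_dec by (rule doubly_stochastic_sum_le_sorted)
  moreover have "(\<Sum>i<n. \<Sum>j<n. a (\<alpha> i) * b (\<beta> j) * P' i j) = (\<Sum>i<n. \<Sum>j<n. a i * b j * P i j)"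
  proof -
    have "(\<Sum>j<n. a (\<alpha> i) * b (\<beta> j) * P' i j) = (\<Sum>j<n. a (\<alpha> i) * b j * P (\<alpha> i) j)" for i
      using sum_\<beta>[of "\<lambda>j. a (\<alpha> i) * b j * P (\<alpha> i) j"] unfolding P'_def by simp
    then show ?thesis
      using sum_\<alpha>[of "\<lambda>i. \<Sum>j<n. a i * b j * P i j"] by simp
  qed
  moreover have "(\<Sum>i<n. a (\<alpha> i) * b (\<beta> i)) = (\<Sum>i<n. a i * b ((\<beta> \<circ> inv_into UNIV \<alpha>) i))"
    using sum.permutes_inv[OF \<alpha>, of "\<lambda>x s. a x * b (\<beta> s)"] by simp
  moreover have "\<beta> \<circ> inv_into UNIV \<alpha> permutes {..<n}"
    using permutes_compose[OF permutes_inv[OF \<alpha>] \<beta>] .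
  ultimately show ?thesis
    by (intro exI[of _ "\<beta> \<circ> inv_into UNIV \<alpha>"]) simp
qed

text \<open>Penalty argument: weighting the rows \<open>c\<close> by a large negative factor forces the
  maximising permutation to respect the vanishing of \<open>\<Sum> c\<^sub>i b\<^sub>j P\<^sub>i\<^sub>j\<close>.\<close>

lemma doubly_stochastic_sum_le_permutation_vanishing:
  fixes a b c :: "nat \<Rightarrow> real"
  assumes P: "doubly_stochastic n P" and b: "\<And>j. j < n \<Longrightarrow> 0 \<le> b j" and c: "\<And>i. i < n \<Longrightarrow> 0 \<le> c i"
    and vanish: "(\<Sum>i<n. \<Sum>j<n. c i * b j * P i j) = 0"
  shows "\<exists>\<sigma>. \<sigma> permutes {..<n} \<and> (\<Sum>i<n. \<Sum>j<n. a i * b j * P i j) \<le> (\<Sum>i<n. a i * b (\<sigma> i))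
     \<and> (\<Sum>i<n. c i * b (\<sigma> i)) = 0"
proof -
  define L where "L = (\<Sum>i<n. \<Sum>j<n. a i * b j * P i j)"
  define s where "s \<sigma> = (\<Sum>i<n. a i * b (\<sigma> i))" for \<sigma>
  define t where "t \<sigma> = (\<Sum>i<n. c i * b (\<sigma> i))" for \<sigma>
  define T where "T = {\<sigma>. \<sigma> permutes {..<n} \<and> 0 < t \<sigma>}"
  have "finite T"
    unfolding T_def by (rule finite_subset[OF _ finite_permutations[of "{..<n}"]]) auto
  define M where "M = - (\<Sum>\<sigma>\<in>T. \<bar>L - s \<sigma>\<bar> / t \<sigma>) - 1"
  have penalty: "s \<sigma> + M * t \<sigma> < L" if "\<sigma> \<in> T" for \<sigma>
  proof -
    have t_pos: "0 < t \<sigma>" using that unfolding T_def by simp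
    have "\<bar>L - s \<sigma>\<bar> / t \<sigma> \<le> (\<Sum>\<sigma>\<in>T. \<bar>L - s \<sigma>\<bar> / t \<sigma>)"
      by (rule member_le_sum) (use that \<open>finite T\<close> in \<open>auto simp: T_def\<close>)
    then have "M * t \<sigma> \<le> (- (\<bar>L - s \<sigma>\<bar> / t \<sigma>) - 1) * t \<sigma>"
      using t_pos unfolding M_def by (intro mult_right_mono) auto
    also have "\<dots> = - \<bar>L - s \<sigma>\<bar> - t \<sigma>"
      using t_pos by (simp add: field_simps)
    finally show ?thesis
      using t_pos by linarith
  qed
  obtain \<sigma> where \<sigma>: "\<sigma> permutes {..<n}"
    and le: "(\<Sum>i<n. \<Sum>j<n. (a i + M * c i) * b j * P i j) \<le> (\<Sum>i<n. (a i + M * c i) * b (\<sigma> i))"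
    using doubly_stochastic_sum_le_permutation[OF P, of "\<lambda>i. a i + M * c i" b] by blast
  have "(\<Sum>i<n. \<Sum>j<n. (a i + M * c i) * b j * P i j) = L + M * (\<Sum>i<n. \<Sum>j<n. c i * b j * P i j)"
    by (simp add: L_def algebra_simps sum.distrib sum_distrib_left)
  moreover have "(\<Sum>i<n. (a i + M * c i) * b (\<sigma> i)) = s \<sigma> + M * t \<sigma>"
    by (simp add: s_def t_def algebra_simps sum.distrib sum_distrib_left)
  ultimately have main: "L \<le> s \<sigma> + M * t \<sigma>"
    using le vanish by simp
  have "0 \<le> t \<sigma>"
    using b c permutes_in_image[OF \<sigma>] unfolding t_def by (auto intro!: sum_nonneg)
  moreover have "\<not> 0 < t \<sigma>"
    using penalty[of \<sigma>] main \<sigma> unfolding T_def by auto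
  ultimately have "t \<sigma> = 0" by simp
  with main \<sigma> show ?thesis
    unfolding L_def s_def t_def by auto
qed

lemma doubly_stochastic_overlap:
  assumes "unitary n U" "unitary n V"
  shows "doubly_stochastic n (overlap U V)"
  using unitary_sum_row_sq[OF unitary_mult[OF unitary_adjoint[OF assms(1)] assms(2)]]
    unitary_sum_col_sq[OF unitary_mult[OF unitary_adjoint[OF assms(1)] assms(2)]]
  unfolding doubly_stochastic_def overlap_def by auto

section \<open>Extended subgradients\<close>

definition finite_part :: "ereal vec \<Rightarrow> nat \<Rightarrow> real" where
  "finite_part d i = real_of_ereal (d $ i)"

definition neg_inf_part :: "ereal vec \<Rightarrow> nat \<Rightarrow> real" where
  "neg_inf_part d i = of_bool (d $ i = -\<infinity>)"

text \<open>Since \<open>real_of_ereal (-\<infinity>) = 0\<close>, \<open>d = finite_part d - \<infinity> \<cdot> neg_inf_part d\<close> with disjoint supports.\<close>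

lemma ext_UDU_eq_spectral_mat:
  "ext_UDU n U d = (spectral_mat n U (finite_part d), spectral_mat n U (neg_inf_part d))"
proof -
  have "mat n n (\<lambda>(i, j). if i = j \<and> d $ i \<noteq> -\<infinity> then complex_of_real (real_of_ereal (d $ i)) else 0)
      = real_diag n (finite_part d)"
    by (rule eq_matI) (auto simp: finite_part_def)
  moreover have "mat n n (\<lambda>(i, j). if i = j \<and> d $ i = -\<infinity> then 1 else 0) = real_diag n (neg_inf_part d)"
    by (rule eq_matI) (auto simp: neg_inf_part_def)
  ultimately show ?thesis
    unfolding ext_UDU_def spectral_mat_def by simp
qed

lemma vpair_minus:
  assumes "x \<in> carrier_vec n" "y \<in> carrier_vec n"
  shows "vpair n d (x - y) = ereal (\<Sum>i<n. finite_part d i * (x $ i - y $ i))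
      + (-\<infinity>) * ereal (\<Sum>i<n. neg_inf_part d i * (x $ i - y $ i))"
proof -
  have "(\<Sum>i | i < n \<and> d $ i \<noteq> -\<infinity>. real_of_ereal (d $ i) * (x - y) $ i)
      = (\<Sum>i<n. finite_part d i * (x $ i - y $ i))"
    using assms by (intro sum.mono_neutral_cong_left) (auto simp: finite_part_def)
  moreover have "(\<Sum>i | i < n \<and> d $ i = -\<infinity>. (x - y) $ i) = (\<Sum>i<n. neg_inf_part d i * (x $ i - y $ i))"
    using assms by (intro sum.mono_neutral_cong_left) (auto simp: neg_inf_part_def)
  ultimately show ?thesis
    unfolding vpair_def by simp
qed

lemma mpair_ext_UDU_minus_UDU:
  assumes U: "unitary n U" and V: "V \<in> carrier_mat n n"
  shows "mpair (ext_UDU n U d) (UDU n V \<mu> - UDU n U lam)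
    = ereal ((\<Sum>i<n. \<Sum>j<n. finite_part d i * \<mu> $ j * overlap U V i j) - (\<Sum>i<n. finite_part d i * lam $ i))
      + (-\<infinity>) * ereal ((\<Sum>i<n. \<Sum>j<n. neg_inf_part d i * \<mu> $ j * overlap U V i j) - (\<Sum>i<n. neg_inf_part d i * lam $ i))"
  unfolding mpair_def ext_UDU_eq_spectral_mat UDU_eq_spectral_mat
  using Re_mtrace_spectral_mat_diff[OF U V] by simp

lemma simplex_permute:
  assumes "\<sigma> permutes {..<n}" "\<mu> \<in> simplex n"
  shows "vec n (\<lambda>i. \<mu> $ \<sigma> i) \<in> simplex n"
proof -
  have "(\<Sum>i<n. \<mu> $ \<sigma> i) = (\<Sum>i<n. \<mu> $ i)"
    using sum.permute[OF assms(1), of "\<lambda>i. \<mu> $ i"] by (simp add: comp_def)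
  then show ?thesis
    using assms permutes_in_image[OF assms(1)] unfolding simplex_def by auto
qed

text \<open>A subgradient with a finite entry \<open>d\<^sub>z\<close> cannot charge \<open>-\<infinity>\<close> to any mass of \<open>lam\<close>:
  otherwise the subgradient inequality fails at the vertex \<open>e\<^sub>z\<close>.\<close>

lemma subdiff_vec_neg_inf_mass:
  assumes d: "d \<in> subdiff_vec n f lam" and lam: "lam \<in> simplex n" and z: "z < n" "d $ z \<noteq> -\<infinity>"
  shows "(\<Sum>i<n. neg_inf_part d i * lam $ i) = 0"
proof (rule ccontr)
  assume "(\<Sum>i<n. neg_inf_part d i * lam $ i) \<noteq> 0"
  moreover have "0 \<le> (\<Sum>i<n. neg_inf_part d i * lam $ i)"
    using lam unfolding simplex_def neg_inf_part_def by (auto intro!: sum_nonneg)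
  ultimately have pos: "0 < (\<Sum>i<n. neg_inf_part d i * lam $ i)" by simp
  define e :: "real vec" where "e = unit_vec n z"
  have e: "e \<in> simplex n"
    using z unfolding simplex_def e_def by (simp add: if_distrib cong: if_cong)
  have "(\<Sum>i<n. neg_inf_part d i * e $ i) = 0"
    using z unfolding e_def neg_inf_part_def by (simp add: if_distrib[of "\<lambda>x. _ * x"] cong: if_cong)
  then have "(\<Sum>i<n. neg_inf_part d i * (e $ i - lam $ i)) < 0"
    using pos by (simp add: right_diff_distrib sum_subtractf)
  moreover have "e \<in> carrier_vec n" "lam \<in> carrier_vec n"
    using e lam unfolding simplex_def by auto
  ultimately have "vpair n d (e - lam) = \<infinity>"
    by (simp add: vpair_minus)
  with d e show False
    unfolding subdiff_vec_def by auto
qed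

lemma subdiff_vec_le_permuted:
  assumes f: "perm_invariant n f" and d: "d \<in> subdiff_vec n f lam" and lam: "lam \<in> simplex n"
    and \<mu>: "\<mu> \<in> simplex n" and \<sigma>: "\<sigma> permutes {..<n}"
    and lam_mass: "(\<Sum>i<n. neg_inf_part d i * lam $ i) = 0"
    and \<sigma>_mass: "(\<Sum>i<n. neg_inf_part d i * \<mu> $ \<sigma> i) = 0"
  shows "f lam + ((\<Sum>i<n. finite_part d i * \<mu> $ \<sigma> i) - (\<Sum>i<n. finite_part d i * lam $ i)) \<le> f \<mu>"
proof -
  define x where "x = vec n (\<lambda>i. \<mu> $ \<sigma> i)"
  have x: "x \<in> simplex n" "f x = f \<mu>"
    using simplex_permute[OF \<sigma> \<mu>] f \<sigma> \<mu> unfolding x_def perm_invariant_def by auto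
  have "vpair n d (x - lam) = ereal ((\<Sum>i<n. finite_part d i * \<mu> $ \<sigma> i) - (\<Sum>i<n. finite_part d i * lam $ i))"
    using lam \<sigma>_mass lam_mass unfolding simplex_def
    by (simp add: vpair_minus x_def right_diff_distrib sum_subtractf)
  with d x show ?thesis
    unfolding subdiff_vec_def by auto
qed

lemma subdiff_vec_le_doubly_stochastic:
  assumes f: "perm_invariant n f" and d: "d \<in> subdiff_vec n f lam" and lam: "lam \<in> simplex n"
    and \<mu>: "\<mu> \<in> simplex n" and P: "doubly_stochastic n P"
  shows "ereal (f lam)
      + (ereal ((\<Sum>i<n. \<Sum>j<n. finite_part d i * \<mu> $ j * P i j) - (\<Sum>i<n. finite_part d i * lam $ i))
        + (-\<infinity>) * ereal ((\<Sum>i<n. \<Sum>j<n. neg_inf_part d i * \<mu> $ j * P i j) - (\<Sum>i<n. neg_inf_part d i * lam $ i)))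
    \<le> ereal (f \<mu>)"
proof -
  have lam_vec: "lam \<in> carrier_vec n" "(\<Sum>i<n. lam $ i) = 1"
    and \<mu>_vec: "\<mu> \<in> carrier_vec n" "\<And>j. j < n \<Longrightarrow> 0 \<le> \<mu> $ j" "(\<Sum>j<n. \<mu> $ j) = 1"
    using lam \<mu> unfolding simplex_def by auto
  consider (all_neg_inf) "\<forall>i<n. d $ i = -\<infinity>" | (finite) z where "z < n" "d $ z \<noteq> -\<infinity>"
    by blast
  then show ?thesis
  proof cases
    case all_neg_inf
    then have parts: "finite_part d i = 0" "neg_inf_part d i = 1" if "i < n" for i
      using that unfolding finite_part_def neg_inf_part_def by auto
    have "vpair n d (\<mu> - lam) = 0"
      using parts lam_vec \<mu>_vec by (simp add: vpair_minus sum_subtractf)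
    with d \<mu> have "f lam \<le> f \<mu>"
      unfolding subdiff_vec_def by auto
    then show ?thesis
      using doubly_stochastic_sum_weighted_cols[OF P, of "\<lambda>j. \<mu> $ j"] parts lam_vec \<mu>_vec by simp
  next
    case finite
    have lam_mass: "(\<Sum>i<n. neg_inf_part d i * lam $ i) = 0"
      using subdiff_vec_neg_inf_mass[OF d lam finite] .
    have "0 \<le> (\<Sum>i<n. \<Sum>j<n. neg_inf_part d i * \<mu> $ j * P i j)"
      using P \<mu>_vec unfolding doubly_stochastic_def by (auto simp: neg_inf_part_def intro!: sum_nonneg)
    then consider "0 < (\<Sum>i<n. \<Sum>j<n. neg_inf_part d i * \<mu> $ j * P i j)"
      | (vanish) "(\<Sum>i<n. \<Sum>j<n. neg_inf_part d i * \<mu> $ j * P i j) = 0"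
      by linarith
    then show ?thesis
    proof cases
      case vanish
      obtain \<sigma> where \<sigma>: "\<sigma> permutes {..<n}"
        and le: "(\<Sum>i<n. \<Sum>j<n. finite_part d i * \<mu> $ j * P i j) \<le> (\<Sum>i<n. finite_part d i * \<mu> $ \<sigma> i)"
        and \<sigma>_mass: "(\<Sum>i<n. neg_inf_part d i * \<mu> $ \<sigma> i) = 0"
        using doubly_stochastic_sum_le_permutation_vanishing[OF P \<mu>_vec(2) _ vanish]
        by (auto simp: neg_inf_part_def)
      then show ?thesis
        using subdiff_vec_le_permuted[OF f d lam \<mu> \<sigma> lam_mass \<sigma>_mass] lam_mass vanish by simp
    qed (use lam_mass in simp)
  qed
qed

lemma subdiff_mat_of_subdiff_vec:
  assumes f: "perm_invariant n f" and lam: "lam \<in> simplex n" and U: "unitary n U"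
    and d: "d \<in> subdiff_vec n f lam"
  shows "ext_UDU n U d \<in> subdiff_mat n (\<lambda>\<rho>. f (eigvals \<rho>)) (UDU n U lam)"
proof -
  have "ereal (f (eigvals (UDU n U lam))) + mpair (ext_UDU n U d) (\<rho> - UDU n U lam) \<le> ereal (f (eigvals \<rho>))"
    if rho: "\<rho> \<in> Dens n" for \<rho>
  proof -
    obtain V \<mu> where V: "unitary n V" and \<mu>: "\<mu> \<in> simplex n" and \<rho>: "\<rho> = UDU n V \<mu>"
      using Dens_spectral_decomposition[OF rho] by blast
    show ?thesis
      unfolding \<rho> perm_invariant_eigvals_UDU[OF f V \<mu>] perm_invariant_eigvals_UDU[OF f U lam]
        mpair_ext_UDU_minus_UDU[OF U unitaryD(1)[OF V]]
      using subdiff_vec_le_doubly_stochastic[OF f d lam \<mu> doubly_stochastic_overlap[OF U V]] .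
  qed
  then show ?thesis
    unfolding subdiff_mat_def ext_UDU_eq_spectral_mat
    using hermitian_spectral_mat[OF unitaryD(1)[OF U]] by auto
qed

lemma subdiff_vec_of_subdiff_mat:
  assumes f: "perm_invariant n f" and lam: "lam \<in> simplex n" and U: "unitary n U"
    and d: "ext_vec n d" and sub: "ext_UDU n U d \<in> subdiff_mat n (\<lambda>\<rho>. f (eigvals \<rho>)) (UDU n U lam)"
  shows "d \<in> subdiff_vec n f lam"
proof -
  have "ereal (f lam) + vpair n d (x - lam) \<le> ereal (f x)" if x: "x \<in> simplex n" for x
  proof -
    have "ereal (f (eigvals (UDU n U lam))) + mpair (ext_UDU n U d) (UDU n U x - UDU n U lam)
        \<le> ereal (f (eigvals (UDU n U x)))"
      using sub UDU_in_Dens[OF U x] unfolding subdiff_mat_def by auto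
    moreover have "mpair (ext_UDU n U d) (UDU n U x - UDU n U lam) = vpair n d (x - lam)"
      using x lam unfolding mpair_ext_UDU_minus_UDU[OF U unitaryD(1)[OF U]] simplex_def
      by (simp add: sum_overlap_self[OF U] vpair_minus right_diff_distrib sum_subtractf)
    ultimately show ?thesis
      by (simp add: perm_invariant_eigvals_UDU[OF f U] x lam)
  qed
  with d show ?thesis
    unfolding subdiff_vec_def by auto
qed

theorem lemma4p2:
  fixes n :: nat and f :: "real vec \<Rightarrow> real" and lam :: "real vec"
    and U :: "complex mat" and d :: "ereal vec"
  assumes "perm_invariant n f" and "convex_on_simplex n f"
    and "lam \<in> simplex n" and "unitary n U" and "ext_vec n d"
  shows "d \<in> subdiff_vec n f lam \<longleftrightarrow>
         ext_UDU n U d \<in> subdiff_mat n (\<lambda>\<rho>. f (eigvals \<rho>)) (UDU n U lam)"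
  using subdiff_mat_of_subdiff_vec[OF assms(1,3,4)] subdiff_vec_of_subdiff_mat[OF assms(1,3,4,5)] by blast

end
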